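(* Let $n\ge2$, and let $\mathcal K\subseteq\mathbb C^n$ be a subset such that for every $V\in\mathcal Z_n$ the set $\mathcal K\cap P^{-1}(V)$ has exactly one element; let $K:=(P|_{\mathcal K})^{-1}:\mathcal Z_n\to\mathbb C^n$. Then $K$ is continuous from $(\mathcal Z_n,d_F)$ to $(\mathbb C^n,d_\infty)$ if and only if $\mathcal K$ is closed in $(\mathbb C^n,d_\infty)$.
   Context: $\mathcal Z_n$ denotes the family of all multisets of complex numbers with exactly $n$ elements counted with multiplicity, with metric $d_F(U,V):=\min_{\tau\in\Pi_n}\max_{1\le j\le n}|u_j-v_{\tau(j)}|$ for $U=\{u_1,\dots,u_n\}$, $V=\{v_1,\dots,v_n\}$, where $\Pi_n$ is the set of permutations of $\{1,\dots,n\}$. $\mathbb C^n$ carries the metric $d_\infty(\mathbf u,\mathbf v)=\max_j|u_j-v_j|$. The map $P:\mathbb C^n\to\mathcal Z_n$ sends $(v_1,\dots,v_n)$ to the multiset $\{v_1,\dots,v_n\}$ (with multiplicities). *)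

theory Defs
  imports "HOL-Analysis.Analysis" "HOL-Library.Multiset" "HOL-Combinatorics.Permutations"
begin

definition Cn :: "nat \<Rightarrow> complex list set" where
  "Cn n = {v. length v = n}"

definition Zn :: "nat \<Rightarrow> complex multiset set" where
  "Zn n = {U. size U = n}"

definition dinf :: "complex list \<Rightarrow> complex list \<Rightarrow> real" where
  "dinf u v = (MAX j\<in>{..<length u}. cmod (u ! j - v ! j))"

definition P :: "complex list \<Rightarrow> complex multiset" where
  "P v = mset v"

definition enum :: "complex multiset \<Rightarrow> complex list" where
  "enum U = (SOME u. mset u = U)"

definition dF :: "nat \<Rightarrow> complex multiset \<Rightarrow> complex multiset \<Rightarrow> real" where
  "dF n U V = (MIN \<tau>\<in>{\<tau>. \<tau> permutes {..<n}}. MAX j\<in>{..<n}. cmod (enum U ! j - enum V ! \<tau> j))"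

definition metric_continuous ::
  "'a set \<Rightarrow> ('a \<Rightarrow> 'a \<Rightarrow> real) \<Rightarrow> 'b set \<Rightarrow> ('b \<Rightarrow> 'b \<Rightarrow> real) \<Rightarrow> ('a \<Rightarrow> 'b) \<Rightarrow> bool" where
  "metric_continuous A dA B dB f \<longleftrightarrow>
     (\<forall>x\<in>A. f x \<in> B) \<and>
     (\<forall>x\<in>A. \<forall>\<epsilon>>0. \<exists>\<delta>>0. \<forall>y\<in>A. dA x y < \<delta> \<longrightarrow> dB (f x) (f y) < \<epsilon>)"

definition metric_closed :: "'a set \<Rightarrow> ('a \<Rightarrow> 'a \<Rightarrow> real) \<Rightarrow> 'a set \<Rightarrow> bool" where
  "metric_closed A d S \<longleftrightarrow> S \<subseteq> A \<and>
     (\<forall>x\<in>A - S. \<exists>\<epsilon>>0. \<forall>y\<in>A. d x y < \<epsilon> \<longrightarrow> y \<notin> S)"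

definition Kinv :: "complex list set \<Rightarrow> complex multiset \<Rightarrow> complex list" where
  "Kinv KK V = (THE v. v \<in> KK \<and> P v = V)"

end

theory Submission
  imports Defs
begin

text \<open>
  The fibre of \<open>P\<close> over \<open>V\<close> is finite, and \<open>d\<^sub>F(V, P u) < d\<close> holds exactly when some
  enumeration of \<open>V\<close> lies within \<open>d\<close> of \<open>u\<close>.
  If \<open>\<K>\<close> is closed, the finitely many enumerations of \<open>V\<close> outside \<open>\<K>\<close> keep a common
  positive distance from \<open>\<K>\<close>; an enumeration of \<open>V\<close> close to \<open>K(U)\<close> is therefore
  in \<open>\<K>\<close>, i.e. it is \<open>K(V)\<close>, which gives continuity.
  Conversely, if \<open>x \<notin> \<K>\<close> then \<open>K(P x) \<noteq> x\<close>, and continuity of \<open>K\<close> at \<open>P x\<close> forces every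
  \<open>y \<in> \<K>\<close> near \<open>x\<close> (so \<open>K(P y) = y\<close>) to be near \<open>K(P x)\<close> as well, which is impossible
  for \<open>y\<close> close enough to \<open>x\<close>.
\<close>

lemma dinf_ge:
  assumes "j < length u"
  shows "cmod (u ! j - v ! j) \<le> dinf u v"
  using assms unfolding dinf_def by (intro Max_ge) auto

lemma dinf_le_iff:
  assumes "0 < length u"
  shows "dinf u v \<le> r \<longleftrightarrow> (\<forall>j<length u. cmod (u ! j - v ! j) \<le> r)"
  using assms unfolding dinf_def by (subst Max_le_iff) auto

lemma dinf_commute:
  assumes "length u = length v"
  shows "dinf u v = dinf v u"
  using assms by (simp add: dinf_def norm_minus_commute)

lemma dinf_triangle:
  assumes "0 < length u" "length v = length u" "length w = length u"
  shows "dinf u w \<le> dinf u v + dinf v w"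
proof (subst dinf_le_iff[OF assms(1)], intro allI impI)
  fix j assume j: "j < length u"
  have "cmod (u ! j - w ! j) \<le> cmod (u ! j - v ! j) + cmod (v ! j - w ! j)"
    using norm_triangle_ineq[of "u ! j - v ! j" "v ! j - w ! j"] by simp
  also have "\<dots> \<le> dinf u v + dinf v w"
    using dinf_ge[OF j, of v] dinf_ge[of j v w] j assms(2) by simp
  finally show "cmod (u ! j - w ! j) \<le> dinf u v + dinf v w" .
qed

lemma dinf_pos:
  assumes "length u = length v" "u \<noteq> v"
  shows "0 < dinf u v"
proof -
  obtain j where j: "j < length u" "u ! j \<noteq> v ! j"
    using assms nth_equalityI by metis
  then have "0 < cmod (u ! j - v ! j)" by simp
  then show ?thesis
    using dinf_ge[OF j(1), of v] by linarith
qed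

lemma dinf_permute_list:
  assumes "p permutes {..<length u}" "length v = length u"
  shows "dinf (permute_list p u) (permute_list p v) = dinf u v"
proof -
  let ?f = "\<lambda>j. cmod (u ! j - v ! j)"
  have "(\<lambda>j. cmod (permute_list p u ! j - permute_list p v ! j)) ` {..<length u}
      = ?f ` (p ` {..<length u})"
    using assms by (auto simp: permute_list_nth image_image intro!: image_cong)
  then show ?thesis
    using permutes_image[OF assms(1)] by (simp add: dinf_def)
qed

lemma mset_enum: "mset (enum U) = U"
  unfolding enum_def by (rule someI_ex) (metis ex_mset)

lemma length_enum: "length (enum U) = size U"
  by (metis mset_enum size_mset)

lemma fibre_eq_permute_enum:
  assumes "size V = n"
  shows "{v. mset v = V} = (\<lambda>\<tau>. permute_list \<tau> (enum V)) ` {\<tau>. \<tau> permutes {..<n}}"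
proof (intro set_eqI iffI)
  fix v assume "v \<in> {v. mset v = V}"
  then have "mset v = mset (enum V)"
    by (simp add: mset_enum)
  then obtain \<tau> where "\<tau> permutes {..<length (enum V)}" "permute_list \<tau> (enum V) = v"
    by (rule mset_eq_permutation)
  then show "v \<in> (\<lambda>\<tau>. permute_list \<tau> (enum V)) ` {\<tau>. \<tau> permutes {..<n}}"
    using assms by (auto simp: length_enum)
qed (use assms in \<open>auto simp: length_enum mset_enum\<close>)

lemma finite_fibre: "finite {v. mset v = (V :: complex multiset)}"
  using fibre_eq_permute_enum[OF refl, of V] finite_permutations[of "{..<size V}"] by simp

lemma dF_eq_Min:
  assumes "size U = n" "size V = n"
  shows "dF n U V = Min (dinf (enum U) ` {v. mset v = V})"
proof -
  have "(MAX j\<in>{..<n}. cmod (enum U ! j - enum V ! \<tau> j)) = dinf (enum U) (permute_list \<tau> (enum V))"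
    if "\<tau> \<in> {\<tau>. \<tau> permutes {..<n}}" for \<tau>
    using that assms by (simp add: dinf_def length_enum permute_list_nth)
  then have "dF n U V = Min ((\<lambda>\<tau>. dinf (enum U) (permute_list \<tau> (enum V))) ` {\<tau>. \<tau> permutes {..<n}})"
    unfolding dF_def by (intro arg_cong[where f = Min] image_cong[OF refl])
  then show ?thesis
    by (simp add: fibre_eq_permute_enum[OF assms(2)] image_image)
qed

lemma dF_mset_less_iff:
  assumes "length u = n" "size V = n"
  shows "dF n V (mset u) < d \<longleftrightarrow> (\<exists>v. mset v = V \<and> dinf v u < d)"
proof
  assume "dF n V (mset u) < d"
  then have Min_less: "Min (dinf (enum V) ` {v. mset v = mset u}) < d"
    using assms by (simp add: dF_eq_Min)
  have "Min (dinf (enum V) ` {v. mset v = mset u}) \<in> dinf (enum V) ` {v. mset v = mset u}"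
    using finite_fibre by (intro Min_in) blast+
  then obtain w where w: "mset w = mset u" "dinf (enum V) w < d"
    using Min_less by force
  obtain q where q: "q permutes {..<length w}" "permute_list q w = u"
    using mset_eq_permutation[OF w(1)[symmetric]] .
  have "length w = length u"
    using arg_cong[OF w(1), of size] by simp
  then have len: "length (enum V) = length w"
    using assms by (simp add: length_enum)
  have "mset (permute_list q (enum V)) = V"
    using q(1) len by (simp add: mset_enum)
  moreover have "dinf (permute_list q (enum V)) (permute_list q w) = dinf (enum V) w"
    using q(1) len by (intro dinf_permute_list) simp_all
  ultimately show "\<exists>v. mset v = V \<and> dinf v u < d"
    using w(2) q(2) by metis
next
  assume "\<exists>v. mset v = V \<and> dinf v u < d"
  then obtain v where v: "mset v = V" "dinf v u < d" by blast
  obtain p where p: "p permutes {..<length v}" "permute_list p v = enum V"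
    using mset_eq_permutation[of "enum V" v] v(1) by (metis mset_enum)
  have len: "length u = length v"
    using assms v(1) by (metis size_mset)
  have "dF n V (mset u) \<le> dinf (enum V) (permute_list p u)"
    unfolding dF_eq_Min[OF assms(2) size_mset[of u, unfolded assms(1)]]
    using p len finite_fibre by (intro Min_le) auto
  also have "\<dots> = dinf v u"
    using p len dinf_permute_list[of p v u] by simp
  finally show "dF n V (mset u) < d" using v(2) by simp
qed

lemma metric_closed_finite_avoid:
  assumes "metric_closed A d S" "finite W" "W \<subseteq> A - S"
  shows "\<exists>e>0. \<forall>w\<in>W. \<forall>y\<in>A. d w y < e \<longrightarrow> y \<notin> S"
proof -
  obtain r where r: "\<forall>w\<in>W. 0 < r w \<and> (\<forall>y\<in>A. d w y < r w \<longrightarrow> y \<notin> S)"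
    using assms(1,3) unfolding metric_closed_def by (metis subsetD)
  define e where "e = Min (insert 1 (r ` W))"
  have "0 < e"
    using assms(2) r by (simp add: e_def)
  moreover have "e \<le> r w" if "w \<in> W" for w
    using assms(2) that by (simp add: e_def)
  ultimately show ?thesis
    using r by fastforce
qed

context
  fixes n :: nat and KK :: "complex list set"
  assumes KK_subset: "KK \<subseteq> Cn n"
    and unique_in_fibre: "\<forall>V\<in>Zn n. \<exists>!v. v \<in> KK \<inter> {u \<in> Cn n. P u = V}"
begin

lemma length_if_in_KK: "v \<in> KK \<Longrightarrow> length v = n"
  using KK_subset by (auto simp: Cn_def)

lemma ex1_in_KK_fibre:
  assumes "size V = n"
  shows "\<exists>!v. v \<in> KK \<and> mset v = V"
proof -
  have "\<exists>!v. v \<in> KK \<inter> {u \<in> Cn n. P u = V}"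
    using unique_in_fibre assms by (simp add: Zn_def)
  moreover have "v \<in> KK \<inter> {u \<in> Cn n. P u = V} \<longleftrightarrow> v \<in> KK \<and> mset v = V" for v
    using KK_subset by (auto simp: P_def)
  ultimately show ?thesis by simp
qed

lemma Kinv_in_KK_fibre:
  assumes "size V = n"
  shows "Kinv KK V \<in> KK" "mset (Kinv KK V) = V"
  using theI'[OF ex1_in_KK_fibre[OF assms]] by (simp_all add: Kinv_def P_def)

lemma Kinv_mset:
  assumes "v \<in> KK"
  shows "Kinv KK (mset v) = v"
  unfolding Kinv_def P_def
  using assms length_if_in_KK ex1_in_KK_fibre[of "mset v"] by (intro the1_equality) auto

lemma continuous_if_closed:
  assumes closed: "metric_closed (Cn n) dinf KK"
  shows "metric_continuous (Zn n) (dF n) (Cn n) dinf (Kinv KK)"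
  unfolding metric_continuous_def
proof (intro conjI ballI allI impI)
  fix V assume "V \<in> Zn n"
  then have "Kinv KK V \<in> KK"
    by (intro Kinv_in_KK_fibre) (simp add: Zn_def)
  then show "Kinv KK V \<in> Cn n"
    using KK_subset by blast
next
  fix V and \<epsilon> :: real assume V: "V \<in> Zn n" and "0 < \<epsilon>"
  have sV: "size V = n" using V by (simp add: Zn_def)
  have "{v. mset v = V} - KK \<subseteq> Cn n - KK"
    using sV by (auto simp: Cn_def)
  then obtain r where "0 < r"
    and r: "\<forall>w\<in>{v. mset v = V} - KK. \<forall>y\<in>Cn n. dinf w y < r \<longrightarrow> y \<notin> KK"
    using metric_closed_finite_avoid[OF closed finite_Diff[OF finite_fibre]] by blast
  show "\<exists>\<delta>>0. \<forall>U\<in>Zn n. dF n V U < \<delta> \<longrightarrow> dinf (Kinv KK V) (Kinv KK U) < \<epsilon>"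
  proof (intro exI[of _ "min r \<epsilon>"] conjI ballI impI)
    show "0 < min r \<epsilon>" using \<open>0 < r\<close> \<open>0 < \<epsilon>\<close> by simp
    fix U assume U: "U \<in> Zn n" "dF n V U < min r \<epsilon>"
    have sU: "size U = n" using U(1) by (simp add: Zn_def)
    define u where "u = Kinv KK U"
    have u: "u \<in> KK" "mset u = U"
      unfolding u_def using Kinv_in_KK_fibre[OF sU] by simp_all
    then have "length u = n" "u \<in> Cn n"
      using length_if_in_KK KK_subset by blast+
    then obtain w where w: "mset w = V" "dinf w u < min r \<epsilon>"
      using U(2) dF_mset_less_iff[OF _ sV] u(2) by blast
    have "w \<in> KK"
    proof (rule ccontr)
      assume "w \<notin> KK"
      then have "u \<notin> KK"
        using r w \<open>u \<in> Cn n\<close> by simp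
      then show False using u(1) by contradiction
    qed
    then have "Kinv KK V = w"
      using Kinv_mset w(1) by blast
    then show "dinf (Kinv KK V) (Kinv KK U) < \<epsilon>"
      using w(2) by (simp add: u_def)
  qed
qed

lemma closed_if_continuous:
  assumes "0 < n" and cont: "metric_continuous (Zn n) (dF n) (Cn n) dinf (Kinv KK)"
  shows "metric_closed (Cn n) dinf KK"
  unfolding metric_closed_def
proof (intro conjI KK_subset ballI)
  fix x assume "x \<in> Cn n - KK"
  then have x: "length x = n" "x \<notin> KK" by (auto simp: Cn_def)
  define v where "v = Kinv KK (mset x)"
  have "v \<in> KK"
    unfolding v_def using x(1) by (intro Kinv_in_KK_fibre) simp
  then have v: "v \<in> KK" "length v = n" "v \<noteq> x"
    using length_if_in_KK x(2) by auto
  define e where "e = dinf v x"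
  have "0 < e"
    unfolding e_def using v(2,3) x(1) by (intro dinf_pos) simp_all
  then have "0 < e / 2" by simp
  moreover have "mset x \<in> Zn n"
    using x by (simp add: Zn_def)
  moreover have "\<forall>V\<in>Zn n. \<forall>\<epsilon>>0. \<exists>\<delta>>0. \<forall>U\<in>Zn n. dF n V U < \<delta> \<longrightarrow> dinf (Kinv KK V) (Kinv KK U) < \<epsilon>"
    using cont unfolding metric_continuous_def by (rule conjunct2)
  ultimately obtain \<delta> where "0 < \<delta>"
    and \<delta>: "\<forall>U\<in>Zn n. dF n (mset x) U < \<delta> \<longrightarrow> dinf v (Kinv KK U) < e / 2"
    unfolding v_def by blast
  show "\<exists>\<epsilon>>0. \<forall>y\<in>Cn n. dinf x y < \<epsilon> \<longrightarrow> y \<notin> KK"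
  proof (intro exI[of _ "min \<delta> (e / 2)"] conjI ballI impI notI)
    show "0 < min \<delta> (e / 2)" using \<open>0 < \<delta>\<close> \<open>0 < e\<close> by simp
    fix y assume y: "y \<in> Cn n" "dinf x y < min \<delta> (e / 2)" and "y \<in> KK"
    have ly: "length y = n" using y(1) by (simp add: Cn_def)
    have "dF n (mset x) (mset y) < \<delta>"
      using dF_mset_less_iff[OF ly] x y(2) by auto
    moreover have "mset y \<in> Zn n"
      using ly by (simp add: Zn_def)
    ultimately have "dinf v (Kinv KK (mset y)) < e / 2"
      using \<delta> by blast
    then have "dinf v y < e / 2"
      using Kinv_mset[OF \<open>y \<in> KK\<close>] by simp
    moreover have "e \<le> dinf v y + dinf y x"
      unfolding e_def using dinf_triangle[of v y x] \<open>0 < n\<close> v(2) ly x(1) by simp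
    moreover have "dinf y x < e / 2"
      using y(2) dinf_commute[of x y] ly x(1) by simp
    ultimately show False by simp
  qed
qed

end

text \<open>The hypothesis \<open>2 \<le> n\<close> is only used as \<open>0 < n\<close>; for \<open>n = 0\<close> the definition of
  \<open>dinf\<close> takes the maximum of the empty set.\<close>
theorem theorem4p1:
  fixes n :: nat and KK :: "complex list set"
  assumes "n \<ge> 2"
    and "KK \<subseteq> Cn n"
    and "\<forall>V\<in>Zn n. \<exists>!v. v \<in> KK \<inter> {u \<in> Cn n. P u = V}"
  shows "metric_continuous (Zn n) (dF n) (Cn n) dinf (Kinv KK) \<longleftrightarrow> metric_closed (Cn n) dinf KK"
proof
  have "0 < n" using assms(1) by simp
  then show "metric_continuous (Zn n) (dF n) (Cn n) dinf (Kinv KK) \<Longrightarrow> metric_closed (Cn n) dinf KK"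
    using closed_if_continuous[OF assms(2,3)] by blast
  show "metric_closed (Cn n) dinf KK \<Longrightarrow> metric_continuous (Zn n) (dF n) (Cn n) dinf (Kinv KK)"
    using continuous_if_closed[OF assms(2,3)] by blast
qed

end
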